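(* Let $D$ be the automaton built from complete DFAs $A,B,C$ as described in the context, let $i$ be a state of $A$, and let $S,S'\subseteq Q_B\times Q_C$ be tableaux with $S\rightarrow S'$. Then the states $(i,S)$ and $(i,S')$ of $D$ are equivalent, i.e. for every $w\in\Sigma^*$, $(i,S)\cdot w\in F_D$ iff $(i,S')\cdot w\in F_D$.
   Context: Let $A=(\Sigma,Q_A=\{0,\dots,m-1\},0,F_A,\cdot)$, $B=(\Sigma,Q_B=\{q_0,\dots,q_{n-1}\},q_0,F_B,\cdot)$, $C=(\Sigma,Q_C=\{r_0,\dots,r_{p-1}\},r_0,F_C,\cdot)$ be complete DFAs. $D=(\Sigma,Q_A\times 2^{Q_B\times Q_C},i_D,F_D,\cdot)$ where $i_D=(0,\emptyset)$ if $0\notin F_A$ and $i_D=(0,\{(q_0,r_0)\})$ otherwise; $(i,S)\in F_D$ iff $S$ contains a pair $(q,r)$ with exactly one of $q\in F_B$, $r\in F_C$; and for $a\in\Sigma$, $(i,S)\cdot a=(i\cdot a,S\cdot a)$ if $i\cdot a\notin F_A$ and $(i\cdot a,S\cdot a\cup\{(q_0,r_0)\})$ otherwise, with $S\cdot a=\{(q\cdot a,r\cdot a):(q,r)\in S\}$; this extends to words. A tableau is a subset of $Q_B\times Q_C$. Write $S\rightarrow S'$ if $S'=S\cup\{(q_y,r_{x'})\}$ where $(q_y,r_{x'})\notin S$ and $(q_x,r_{x'}),(q_x,r_{y'}),(q_y,r_{y'})\in S$ for some $q_x\neq q_y$, $r_{x'}\neq r_{y'}$ (i.e. $S'$ completes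 a right triangle of $S$ into a rectangle). *)

theory Defs
  imports Main
begin

definition complete_dfa ::
  "'s set \<Rightarrow> 'q set \<Rightarrow> 'q \<Rightarrow> 'q set \<Rightarrow> ('q \<Rightarrow> 's \<Rightarrow> 'q) \<Rightarrow> bool" where
  "complete_dfa Sig Q q0 F delta \<longleftrightarrow>
     finite Sig \<and> finite Q \<and> q0 \<in> Q \<and> F \<subseteq> Q \<and>
     (\<forall>q\<in>Q. \<forall>a\<in>Sig. delta q a \<in> Q)"

definition tab_trans ::
  "('b \<Rightarrow> 's \<Rightarrow> 'b) \<Rightarrow> ('c \<Rightarrow> 's \<Rightarrow> 'c) \<Rightarrow> ('b \<times> 'c) set \<Rightarrow> 's \<Rightarrow> ('b \<times> 'c) set" where
  "tab_trans dB dC S a = (\<lambda>(q, r). (dB q a, dC r a)) ` S"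

definition D_step ::
  "('a \<Rightarrow> 's \<Rightarrow> 'a) \<Rightarrow> 'a set \<Rightarrow> ('b \<Rightarrow> 's \<Rightarrow> 'b) \<Rightarrow> 'b \<Rightarrow> ('c \<Rightarrow> 's \<Rightarrow> 'c) \<Rightarrow> 'c \<Rightarrow>
   'a \<times> ('b \<times> 'c) set \<Rightarrow> 's \<Rightarrow> 'a \<times> ('b \<times> 'c) set" where
  "D_step dA FA dB q0 dC r0 st a =
     (let i' = dA (fst st) a; S' = tab_trans dB dC (snd st) a
      in if i' \<in> FA then (i', insert (q0, r0) S') else (i', S'))"

definition D_run ::
  "('a \<Rightarrow> 's \<Rightarrow> 'a) \<Rightarrow> 'a set \<Rightarrow> ('b \<Rightarrow> 's \<Rightarrow> 'b) \<Rightarrow> 'b \<Rightarrow> ('c \<Rightarrow> 's \<Rightarrow> 'c) \<Rightarrow> 'c \<Rightarrow>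
   'a \<times> ('b \<times> 'c) set \<Rightarrow> 's list \<Rightarrow> 'a \<times> ('b \<times> 'c) set" where
  "D_run dA FA dB q0 dC r0 st w = foldl (D_step dA FA dB q0 dC r0) st w"

definition D_final :: "'b set \<Rightarrow> 'c set \<Rightarrow> 'a \<times> ('b \<times> 'c) set \<Rightarrow> bool" where
  "D_final FB FC st \<longleftrightarrow> (\<exists>(q, r) \<in> snd st. (q \<in> FB) \<noteq> (r \<in> FC))"

text \<open>S \<rightarrow> S': S' completes a right triangle of S into a rectangle.\<close>
definition tab_arrow :: "('b \<times> 'c) set \<Rightarrow> ('b \<times> 'c) set \<Rightarrow> bool" where
  "tab_arrow S S' \<longleftrightarrow>
     (\<exists>qx qy rx ry. qx \<noteq> qy \<and> rx \<noteq> ry \<and> (qy, rx) \<notin> S \<and>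
        (qx, rx) \<in> S \<and> (qx, ry) \<in> S \<and> (qy, ry) \<in> S \<and> S' = insert (qy, rx) S)"

end

theory Submission
  imports Defs
begin

text \<open>Adding the fourth corner of a rectangle whose other three corners are present does not
  change finality: a corner pair \<open>(q, r)\<close> witnesses finality iff exactly one of
  \<open>q \<in> F\<^sub>B\<close>, \<open>r \<in> F\<^sub>C\<close> holds, and such a parity discrepancy at \<open>(qy, rx)\<close> forces one at
  one of the three other corners. Moreover the letter action maps rectangles to rectangles,
  and adding the same pair \<open>(q\<^sub>0, r\<^sub>0)\<close> on both sides keeps them, so the relation survives
  every transition of \<open>D\<close>; hence \<open>(i, S)\<close> and \<open>(i, S')\<close> accept the same words.
  Images of rectangles may degenerate (corners may merge, the new corner may already be present),
  which is why the invariant below drops the side conditions of \<open>tab_arrow\<close>.\<close>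

definition completes_rectangle :: "('b \<times> 'c) set \<Rightarrow> ('b \<times> 'c) set \<Rightarrow> bool" where
  "completes_rectangle S S' \<longleftrightarrow>
     (\<exists>qx qy rx ry. (qx, rx) \<in> S \<and> (qx, ry) \<in> S \<and> (qy, ry) \<in> S \<and> S' = insert (qy, rx) S)"

lemma tab_arrow_imp_completes_rectangle: "tab_arrow S S' \<Longrightarrow> completes_rectangle S S'"
  unfolding tab_arrow_def completes_rectangle_def by blast

lemma D_final_completes_rectangle:
  assumes "completes_rectangle (snd st) (snd st')"
  shows "D_final FB FC st \<longleftrightarrow> D_final FB FC st'"
proof -
  obtain qx qy rx ry where corners: "(qx, rx) \<in> snd st" "(qx, ry) \<in> snd st" "(qy, ry) \<in> snd st"
    and st': "snd st' = insert (qy, rx) (snd st)"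
    using assms unfolding completes_rectangle_def by blast
  have "(qy \<in> FB) \<noteq> (rx \<in> FC) \<Longrightarrow> D_final FB FC st"
    using corners unfolding D_final_def by (cases "qx \<in> FB"; cases "ry \<in> FC") fastforce+
  then show ?thesis
    using st' unfolding D_final_def by auto
qed

lemma tab_trans_completes_rectangle:
  "completes_rectangle S S' \<Longrightarrow> completes_rectangle (tab_trans dB dC S a) (tab_trans dB dC S' a)"
  unfolding completes_rectangle_def tab_trans_def by force

lemma completes_rectangle_insert:
  "completes_rectangle S S' \<Longrightarrow> completes_rectangle (insert p S) (insert p S')"
  unfolding completes_rectangle_def by blast

lemma D_step_completes_rectangle:
  assumes "fst st = fst st'" and "completes_rectangle (snd st) (snd st')"
  shows "fst (D_step dA FA dB q0 dC r0 st a) = fst (D_step dA FA dB q0 dC r0 st' a)"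
    and "completes_rectangle (snd (D_step dA FA dB q0 dC r0 st a))
                             (snd (D_step dA FA dB q0 dC r0 st' a))"
proof -
  have "completes_rectangle (tab_trans dB dC (snd st) a) (tab_trans dB dC (snd st') a)"
    using assms(2) by (rule tab_trans_completes_rectangle)
  then show "fst (D_step dA FA dB q0 dC r0 st a) = fst (D_step dA FA dB q0 dC r0 st' a)"
    and "completes_rectangle (snd (D_step dA FA dB q0 dC r0 st a))
                             (snd (D_step dA FA dB q0 dC r0 st' a))"
    using assms(1) by (simp_all add: D_step_def Let_def completes_rectangle_insert)
qed

lemma D_run_final_completes_rectangle:
  assumes "fst st = fst st'" and "completes_rectangle (snd st) (snd st')"
  shows "D_final FB FC (D_run dA FA dB q0 dC r0 st w) \<longleftrightarrow>
         D_final FB FC (D_run dA FA dB q0 dC r0 st' w)"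
  using assms
proof (induction w arbitrary: st st')
  case Nil
  then show ?case by (simp add: D_run_def D_final_completes_rectangle)
next
  case (Cons a w)
  from Cons.IH[OF D_step_completes_rectangle[OF Cons.prems]]
  show ?case by (simp add: D_run_def)
qed

theorem lemma4:
  fixes Sig :: "'s set"
    and QA :: "'a set" and iA :: 'a and FA :: "'a set" and dA :: "'a \<Rightarrow> 's \<Rightarrow> 'a"
    and QB :: "'b set" and q0 :: 'b and FB :: "'b set" and dB :: "'b \<Rightarrow> 's \<Rightarrow> 'b"
    and QC :: "'c set" and r0 :: 'c and FC :: "'c set" and dC :: "'c \<Rightarrow> 's \<Rightarrow> 'c"
  assumes "complete_dfa Sig QA iA FA dA"
    and "complete_dfa Sig QB q0 FB dB"
    and "complete_dfa Sig QC r0 FC dC"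
    and "i \<in> QA"
    and "S \<subseteq> QB \<times> QC" and "S' \<subseteq> QB \<times> QC"
    and "tab_arrow S S'"
  shows "\<forall>w \<in> lists Sig.
           D_final FB FC (D_run dA FA dB q0 dC r0 (i, S) w) \<longleftrightarrow>
           D_final FB FC (D_run dA FA dB q0 dC r0 (i, S') w)"
proof
  fix w
  have "completes_rectangle (snd (i, S)) (snd (i, S'))"
    using assms(7) by (simp add: tab_arrow_imp_completes_rectangle)
  then show "D_final FB FC (D_run dA FA dB q0 dC r0 (i, S) w) \<longleftrightarrow>
             D_final FB FC (D_run dA FA dB q0 dC r0 (i, S') w)"
    by (rule D_run_final_completes_rectangle[rotated]) simp
qed

end
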